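(* Let $\mathcal{D}$ be a liability category and let $\mathcal{L}$ be the liability sheaf on $\mathcal{H}_G$ of a liability network $N=(G,X,\lambda,\iota;\delta,\hat\alpha)$ in $\mathcal{D}$, where $G=(V,E,s,t)$ is acyclic, and let $r$ be the maximum length (in edges) of a directed path in $G$. Then $\Phi_*^{r+1}$ is constant on $\mathcal{G}_P=\mathrm{Hom}(1,P)$, with image a single global element $\mathbf{x}^*\in\mathrm{Fix}(\Phi_* )$; equivalently, $\mathcal{H}_G$ admits a unique clearing section (i.e. $\Gamma(\mathcal{H}_G;\mathcal{L})$ has exactly one element), computed by $r+1$ applications of $\Phi_*$ to any starting point.
   Context: A liability category is a category $\mathcal{D}$ with terminal object $1$, finite products and equalizers, a partial order on each $\mathrm{Hom}(1,P)$ preserved by postcomposition, a pullback-stable class $\mathcal{S}_P$ of constraint monomorphisms into each $P$, bound selectors $\beta_P:\mathrm{Hom}(1,P)\to\mathcal{S}_P$, and order isomorphisms $\mathrm{Hom}(1,\prod_iP_i)\cong\prod_i\mathrm{Hom}(1,P_i)$ (componentwise order) for finite families. A liability network in $\mathcal{D}$: finite directed graph $G=(V,E,s,t)$, payment objects $X_v$, liabilities $\lambda_e:1\to X_{s(e)}$, exogenous resources $\iota_v:1\to X_v$, distributors $\delta_e:X_{s(e)}\to X_{s(e)}^{\lambda_e}$ where $X_{s(e)}^{\lambda_e}$ is the domain of $\beta_{X_{s(e)}}(\lambda_e)$, aggregators $\hat\alpha_v:X_v\times\prod_{t(e)=v}X_{s(e)}^{\lambda_e}\to X_v$, and partial aggregators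 $\alpha_v=\hat\alpha_v\circ(\iota_v\times\mathrm{id}):\prod_{t(e)=v}X_{s(e)}^{\lambda_e}\to X_v$, an empty product being $1$. With $P=\prod_vX_v$, $B=\prod_eX_{s(e)}^{\lambda_e}$, $D:P\to B$ with components $\delta_e\circ\pi_{s(e)}$ and $A:B\to P$ with components $\alpha_v\circ\langle\pi_e\rangle_{t(e)=v}$, the clearing operator is $\Phi=A\circ D$; $\Phi_*(\mathbf{x})=\Phi\circ\mathbf{x}$ on $\mathrm{Hom}(1,P)$ and $\mathrm{Fix}(\Phi_* )$ is its fixed-point set. The liability hypergraph $\mathcal{H}_G$ has vertices $V\sqcup\{e^*:e\in E\}$ and hyperedges $h_v^\delta$ (source $\{v\}$, target $\{e^*:s(e)=v\}$) and $h_v^\alpha$ (empty source, target $\{e^*:t(e)=v\}\cup\{v\}$); the incidence category $\mathcal{I}(\mathcal{H}_G)$ has one non-identity arrow $h\to w$ per incidence and no composites. The liability sheaf has stalks $X_v$ at $v,h_v^\delta$, $X_{s(e)}^{\lambda_e}$ at $e^*$, $\prod_{t(e)=v}X_{s(e)}^{\lambda_e}$ at $h_v^\alpha$, restrictions $\mathrm{id},\delta_e,\pi_e,\alpha_v$. $\Gamma(\mathcal{H}_G;\mathcal{L})=\mathrm{Hom}(1,\lim_{\mathcal{I}(\mathcal{H}_G)}\mathcal{L})$; its elements are the clearing sections. *)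

theory Defs
  imports Main
begin

record ('o,'m) lcat =
  ob   :: "'o set"
  ar   :: "'m set"
  dm   :: "'m \<Rightarrow> 'o"
  cd   :: "'m \<Rightarrow> 'o"
  idt  :: "'o \<Rightarrow> 'm"
  cmp  :: "'m \<Rightarrow> 'm \<Rightarrow> 'm"          \<comment> \<open>cmp g f = g o f\<close>
  trm  :: "'o"
  ordr :: "'o \<Rightarrow> 'm \<Rightarrow> 'm \<Rightarrow> bool"   \<comment> \<open>partial order on Hom(1,P)\<close>
  cons :: "'o \<Rightarrow> 'm set"
  bsel :: "'o \<Rightarrow> 'm \<Rightarrow> 'm"

definition hom :: "('o,'m,'z) lcat_scheme \<Rightarrow> 'o \<Rightarrow> 'o \<Rightarrow> 'm set" where
  "hom L a b = {f \<in> ar L. dm L f = a \<and> cd L f = b}"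

definition is_category :: "('o,'m,'z) lcat_scheme \<Rightarrow> bool" where
  "is_category L \<longleftrightarrow>
     (\<forall>f\<in>ar L. dm L f \<in> ob L \<and> cd L f \<in> ob L) \<and>
     (\<forall>a\<in>ob L. idt L a \<in> hom L a a) \<and>
     (\<forall>f\<in>ar L. \<forall>g\<in>ar L. cd L f = dm L g \<longrightarrow> cmp L g f \<in> hom L (dm L f) (cd L g)) \<and>
     (\<forall>f\<in>ar L. cmp L f (idt L (dm L f)) = f \<and> cmp L (idt L (cd L f)) f = f) \<and>
     (\<forall>f\<in>ar L. \<forall>g\<in>ar L. \<forall>h\<in>ar L. cd L f = dm L g \<and> cd L g = dm L h \<longrightarrow>
         cmp L h (cmp L g f) = cmp L (cmp L h g) f)"

definition is_terminal :: "('o,'m,'z) lcat_scheme \<Rightarrow> 'o \<Rightarrow> bool" where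
  "is_terminal L T \<longleftrightarrow> T \<in> ob L \<and> (\<forall>a\<in>ob L. \<exists>!f. f \<in> hom L a T)"

definition is_product ::
  "('o,'m,'z) lcat_scheme \<Rightarrow> 'i set \<Rightarrow> ('i \<Rightarrow> 'o) \<Rightarrow> 'o \<Rightarrow> ('i \<Rightarrow> 'm) \<Rightarrow> bool" where
  "is_product L I X Pr pr \<longleftrightarrow> Pr \<in> ob L \<and> (\<forall>i\<in>I. pr i \<in> hom L Pr (X i)) \<and>
     (\<forall>Q\<in>ob L. \<forall>f. (\<forall>i\<in>I. f i \<in> hom L Q (X i)) \<longrightarrow>
        (\<exists>!u. u \<in> hom L Q Pr \<and> (\<forall>i\<in>I. cmp L (pr i) u = f i)))"

definition is_binprod ::
  "('o,'m,'z) lcat_scheme \<Rightarrow> 'o \<Rightarrow> 'o \<Rightarrow> 'o \<Rightarrow> 'm \<Rightarrow> 'm \<Rightarrow> bool" where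
  "is_binprod L A B Pr p1 p2 \<longleftrightarrow> Pr \<in> ob L \<and> p1 \<in> hom L Pr A \<and> p2 \<in> hom L Pr B \<and>
     (\<forall>Q\<in>ob L. \<forall>f g. f \<in> hom L Q A \<and> g \<in> hom L Q B \<longrightarrow>
        (\<exists>!u. u \<in> hom L Q Pr \<and> cmp L p1 u = f \<and> cmp L p2 u = g))"

text \<open>Finite products: every family indexed by {..<n} has a product (every finite family
  can be reindexed this way).\<close>
definition has_finite_products :: "('o,'m,'z) lcat_scheme \<Rightarrow> bool" where
  "has_finite_products L \<longleftrightarrow>
     (\<forall>n::nat. \<forall>X. (\<forall>i<n. X i \<in> ob L) \<longrightarrow> (\<exists>Pr pr. is_product L {..<n} X Pr pr))"

definition is_equalizer ::
  "('o,'m,'z) lcat_scheme \<Rightarrow> 'm \<Rightarrow> 'm \<Rightarrow> 'o \<Rightarrow> 'm \<Rightarrow> bool" where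
  "is_equalizer L f g Eq e \<longleftrightarrow> Eq \<in> ob L \<and> e \<in> hom L Eq (dm L f) \<and>
     cmp L f e = cmp L g e \<and>
     (\<forall>h\<in>ar L. cd L h = dm L f \<and> cmp L f h = cmp L g h \<longrightarrow>
        (\<exists>!u. u \<in> hom L (dm L h) Eq \<and> cmp L e u = h))"

definition has_equalizers :: "('o,'m,'z) lcat_scheme \<Rightarrow> bool" where
  "has_equalizers L \<longleftrightarrow> (\<forall>a\<in>ob L. \<forall>b\<in>ob L. \<forall>f g. f \<in> hom L a b \<and> g \<in> hom L a b \<longrightarrow>
     (\<exists>Eq e. is_equalizer L f g Eq e))"

definition is_monic :: "('o,'m,'z) lcat_scheme \<Rightarrow> 'm \<Rightarrow> bool" where
  "is_monic L m \<longleftrightarrow> m \<in> ar L \<and>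
     (\<forall>g\<in>ar L. \<forall>h\<in>ar L. cd L g = dm L m \<and> cd L h = dm L m \<and> dm L g = dm L h \<and>
        cmp L m g = cmp L m h \<longrightarrow> g = h)"

text \<open>Pullback square: m' (into dom f) is the pullback of m along f, with g : dom m' -> dom m.\<close>
definition is_pullback ::
  "('o,'m,'z) lcat_scheme \<Rightarrow> 'm \<Rightarrow> 'm \<Rightarrow> 'm \<Rightarrow> 'm \<Rightarrow> bool" where
  "is_pullback L m f m' g \<longleftrightarrow> m \<in> ar L \<and> f \<in> ar L \<and> m' \<in> ar L \<and> g \<in> ar L \<and>
     cd L m = cd L f \<and> cd L m' = dm L f \<and> cd L g = dm L m \<and> dm L m' = dm L g \<and>
     cmp L m g = cmp L f m' \<and>
     (\<forall>a\<in>ar L. \<forall>b\<in>ar L. cd L a = dm L f \<and> cd L b = dm L m \<and> dm L a = dm L b \<and>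
        cmp L m b = cmp L f a \<longrightarrow>
        (\<exists>!u. u \<in> hom L (dm L a) (dm L m') \<and> cmp L m' u = a \<and> cmp L g u = b))"

definition liability_category :: "('o,'m,'z) lcat_scheme \<Rightarrow> bool" where
  "liability_category L \<longleftrightarrow>
     is_category L \<and> is_terminal L (trm L) \<and> has_finite_products L \<and> has_equalizers L \<and>
     \<comment> \<open>partial order on each Hom(1,P)\<close>
     (\<forall>P\<in>ob L.
        (\<forall>x\<in>hom L (trm L) P. ordr L P x x) \<and>
        (\<forall>x\<in>hom L (trm L) P. \<forall>y\<in>hom L (trm L) P. ordr L P x y \<and> ordr L P y x \<longrightarrow> x = y) \<and>
        (\<forall>x\<in>hom L (trm L) P. \<forall>y\<in>hom L (trm L) P. \<forall>z\<in>hom L (trm L) P.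
            ordr L P x y \<and> ordr L P y z \<longrightarrow> ordr L P x z)) \<and>
     \<comment> \<open>preserved by postcomposition\<close>
     (\<forall>P\<in>ob L. \<forall>Q\<in>ob L. \<forall>f\<in>hom L P Q. \<forall>x\<in>hom L (trm L) P. \<forall>y\<in>hom L (trm L) P.
        ordr L P x y \<longrightarrow> ordr L Q (cmp L f x) (cmp L f y)) \<and>
     \<comment> \<open>constraint monomorphisms into P, stable under pullback\<close>
     (\<forall>P\<in>ob L. \<forall>m\<in>cons L P. is_monic L m \<and> cd L m = P) \<and>
     (\<forall>P\<in>ob L. \<forall>m\<in>cons L P. \<forall>Q\<in>ob L. \<forall>f\<in>hom L Q P. \<forall>m' g.
        is_pullback L m f m' g \<longrightarrow> m' \<in> cons L Q) \<and>
     \<comment> \<open>bound selectors\<close>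
     (\<forall>P\<in>ob L. \<forall>x\<in>hom L (trm L) P. bsel L P x \<in> cons L P) \<and>
     \<comment> \<open>Hom(1, prod P_i) = prod Hom(1,P_i) as orders (componentwise order), finite families\<close>
     (\<forall>n::nat. \<forall>X Pr pr. (\<forall>i<n. X i \<in> ob L) \<and> is_product L {..<n} X Pr pr \<longrightarrow>
        (\<forall>x\<in>hom L (trm L) Pr. \<forall>y\<in>hom L (trm L) Pr.
           ordr L Pr x y \<longleftrightarrow> (\<forall>i<n. ordr L (X i) (cmp L (pr i) x) (cmp L (pr i) y))))"

record ('v,'e,'o,'m) lnet =
  Vs    :: "'v set"
  Es    :: "'e set"
  src   :: "'e \<Rightarrow> 'v"
  tgt   :: "'e \<Rightarrow> 'v"
  Xo    :: "'v \<Rightarrow> 'o"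
  lam   :: "'e \<Rightarrow> 'm"
  iota  :: "'v \<Rightarrow> 'm"
  delta :: "'e \<Rightarrow> 'm"
  ahat  :: "'v \<Rightarrow> 'm"

text \<open>Chosen product cones used to form the products appearing in the definitions.\<close>
record ('v,'e,'o,'m) pchoice =
  Pobj  :: "'o"
  piP   :: "'v \<Rightarrow> 'm"
  Bobj  :: "'o"                \<comment> \<open>B = prod_e X_(s e)^(lam e)\<close>
  piB   :: "'e \<Rightarrow> 'm"
  Inobj :: "'v \<Rightarrow> 'o"
  piIn  :: "'v \<Rightarrow> 'e \<Rightarrow> 'm"
  XIobj :: "'v \<Rightarrow> 'o"
  pr1   :: "'v \<Rightarrow> 'm"
  pr2   :: "'v \<Rightarrow> 'm"

definition bobj :: "('o,'m,'z) lcat_scheme \<Rightarrow> ('v,'e,'o,'m,'y) lnet_scheme \<Rightarrow> 'e \<Rightarrow> 'o" where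
  "bobj L N e = dm L (bsel L (Xo N (src N e)) (lam N e))"

definition in_edges :: "('v,'e,'o,'m,'y) lnet_scheme \<Rightarrow> 'v \<Rightarrow> 'e set" where
  "in_edges N v = {e \<in> Es N. tgt N e = v}"

definition liability_network ::
  "('o,'m,'z) lcat_scheme \<Rightarrow> ('v,'e,'o,'m,'y) lnet_scheme \<Rightarrow> ('v,'e,'o,'m,'x) pchoice_scheme \<Rightarrow> bool" where
  "liability_network L N K \<longleftrightarrow>
     finite (Vs N) \<and> finite (Es N) \<and>
     (\<forall>e\<in>Es N. src N e \<in> Vs N \<and> tgt N e \<in> Vs N) \<and>
     (\<forall>v\<in>Vs N. Xo N v \<in> ob L) \<and>
     (\<forall>e\<in>Es N. lam N e \<in> hom L (trm L) (Xo N (src N e))) \<and>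
     (\<forall>v\<in>Vs N. iota N v \<in> hom L (trm L) (Xo N v)) \<and>
     (\<forall>e\<in>Es N. delta N e \<in> hom L (Xo N (src N e)) (bobj L N e)) \<and>
     is_product L (Vs N) (Xo N) (Pobj K) (piP K) \<and>
     is_product L (Es N) (bobj L N) (Bobj K) (piB K) \<and>
     (\<forall>v\<in>Vs N. is_product L (in_edges N v) (bobj L N) (Inobj K v) (piIn K v)) \<and>
     (\<forall>v\<in>Vs N. is_binprod L (Xo N v) (Inobj K v) (XIobj K v) (pr1 K v) (pr2 K v)) \<and>
     (\<forall>v\<in>Vs N. ahat N v \<in> hom L (XIobj K v) (Xo N v))"

definition tuple :: "('o,'m,'z) lcat_scheme \<Rightarrow> 'o \<Rightarrow> 'o \<Rightarrow> 'i set \<Rightarrow> ('i \<Rightarrow> 'm) \<Rightarrow> ('i \<Rightarrow> 'm) \<Rightarrow> 'm" where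
  "tuple L Q Pr I pr f = (THE u. u \<in> hom L Q Pr \<and> (\<forall>i\<in>I. cmp L (pr i) u = f i))"

definition pairing :: "('o,'m,'z) lcat_scheme \<Rightarrow> 'o \<Rightarrow> 'o \<Rightarrow> 'm \<Rightarrow> 'm \<Rightarrow> 'm \<Rightarrow> 'm \<Rightarrow> 'm" where
  "pairing L Q Pr p1 p2 f g = (THE u. u \<in> hom L Q Pr \<and> cmp L p1 u = f \<and> cmp L p2 u = g)"

definition bang :: "('o,'m,'z) lcat_scheme \<Rightarrow> 'o \<Rightarrow> 'm" where
  "bang L Q = (THE k. k \<in> hom L Q (trm L))"

text \<open>Partial aggregator alpha_v = ahat_v o (iota_v x id), with 1 x In_v identified with In_v.\<close>
definition partial_agg ::
  "('o,'m,'z) lcat_scheme \<Rightarrow> ('v,'e,'o,'m,'y) lnet_scheme \<Rightarrow> ('v,'e,'o,'m,'x) pchoice_scheme \<Rightarrow> 'v \<Rightarrow> 'm" where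
  "partial_agg L N K v = cmp L (ahat N v)
     (pairing L (Inobj K v) (XIobj K v) (pr1 K v) (pr2 K v)
        (cmp L (iota N v) (bang L (Inobj K v))) (idt L (Inobj K v)))"

definition Dmap :: "('o,'m,'z) lcat_scheme \<Rightarrow> ('v,'e,'o,'m,'y) lnet_scheme \<Rightarrow> ('v,'e,'o,'m,'x) pchoice_scheme \<Rightarrow> 'm" where
  "Dmap L N K = tuple L (Pobj K) (Bobj K) (Es N) (piB K) (\<lambda>e. cmp L (delta N e) (piP K (src N e)))"

definition Amap :: "('o,'m,'z) lcat_scheme \<Rightarrow> ('v,'e,'o,'m,'y) lnet_scheme \<Rightarrow> ('v,'e,'o,'m,'x) pchoice_scheme \<Rightarrow> 'm" where
  "Amap L N K = tuple L (Bobj K) (Pobj K) (Vs N) (piP K)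
     (\<lambda>v. cmp L (partial_agg L N K v)
            (tuple L (Bobj K) (Inobj K v) (in_edges N v) (piIn K v) (piB K)))"

definition clearing_op :: "('o,'m,'z) lcat_scheme \<Rightarrow> ('v,'e,'o,'m,'y) lnet_scheme \<Rightarrow> ('v,'e,'o,'m,'x) pchoice_scheme \<Rightarrow> 'm" where
  "clearing_op L N K = cmp L (Amap L N K) (Dmap L N K)"

definition clearing_push :: "('o,'m,'z) lcat_scheme \<Rightarrow> ('v,'e,'o,'m,'y) lnet_scheme \<Rightarrow> ('v,'e,'o,'m,'x) pchoice_scheme \<Rightarrow> 'm \<Rightarrow> 'm" where
  "clearing_push L N K x = cmp L (clearing_op L N K) x"

definition edge_rel :: "('v,'e,'o,'m,'y) lnet_scheme \<Rightarrow> ('v \<times> 'v) set" where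
  "edge_rel N = {(src N e, tgt N e) | e. e \<in> Es N}"

definition is_dpath :: "('v,'e,'o,'m,'y) lnet_scheme \<Rightarrow> 'e list \<Rightarrow> bool" where
  "is_dpath N es \<longleftrightarrow> set es \<subseteq> Es N \<and>
     (\<forall>i. Suc i < length es \<longrightarrow> tgt N (es ! i) = src N (es ! Suc i))"

definition max_path_len :: "('v,'e,'o,'m,'y) lnet_scheme \<Rightarrow> nat" where
  "max_path_len N = Max (length ` {es. is_dpath N es})"

datatype ('v,'e) hnode = VN 'v | EN 'e | HD 'v | HA 'v
  \<comment> \<open>vertex v, vertex e*, hyperedge h_v^delta, hyperedge h_v^alpha\<close>

definition hyp_nodes :: "('v,'e,'o,'m,'y) lnet_scheme \<Rightarrow> ('v,'e) hnode set" where
  "hyp_nodes N = VN ` Vs N \<union> EN ` Es N \<union> HD ` Vs N \<union> HA ` Vs N"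

definition sheaf_stalk ::
  "('o,'m,'z) lcat_scheme \<Rightarrow> ('v,'e,'o,'m,'y) lnet_scheme \<Rightarrow> ('v,'e,'o,'m,'x) pchoice_scheme \<Rightarrow> ('v,'e) hnode \<Rightarrow> 'o" where
  "sheaf_stalk L N K n = (case n of VN v \<Rightarrow> Xo N v | EN e \<Rightarrow> bobj L N e
                          | HD v \<Rightarrow> Xo N v | HA v \<Rightarrow> Inobj K v)"

text \<open>Non-identity arrows of the incidence category (one per incidence h -> w)
  together with the restriction maps of the liability sheaf.\<close>
definition sheaf_res ::
  "('o,'m,'z) lcat_scheme \<Rightarrow> ('v,'e,'o,'m,'y) lnet_scheme \<Rightarrow> ('v,'e,'o,'m,'x) pchoice_scheme
     \<Rightarrow> (('v,'e) hnode \<times> ('v,'e) hnode \<times> 'm) set" where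
  "sheaf_res L N K =
     {(HD v, VN v, idt L (Xo N v)) | v. v \<in> Vs N} \<union>
     {(HD (src N e), EN e, delta N e) | e. e \<in> Es N} \<union>
     {(HA (tgt N e), EN e, piIn K (tgt N e) e) | e. e \<in> Es N} \<union>
     {(HA v, VN v, partial_agg L N K v) | v. v \<in> Vs N}"

text \<open>Limit of a diagram over a category whose only non-identity arrows are the given
  generating arrows (no composites), as for the incidence category.\<close>
definition is_cone ::
  "('o,'m,'z) lcat_scheme \<Rightarrow> 'n set \<Rightarrow> ('n \<Rightarrow> 'o) \<Rightarrow> ('n \<times> 'n \<times> 'm) set \<Rightarrow> 'o \<Rightarrow> ('n \<Rightarrow> 'm) \<Rightarrow> bool" where
  "is_cone L Nd F R Q c \<longleftrightarrow> Q \<in> ob L \<and> (\<forall>n\<in>Nd. c n \<in> hom L Q (F n)) \<and>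
     (\<forall>(h,w,f)\<in>R. cmp L f (c h) = c w)"

definition is_limit ::
  "('o,'m,'z) lcat_scheme \<Rightarrow> 'n set \<Rightarrow> ('n \<Rightarrow> 'o) \<Rightarrow> ('n \<times> 'n \<times> 'm) set \<Rightarrow> 'o \<Rightarrow> ('n \<Rightarrow> 'm) \<Rightarrow> bool" where
  "is_limit L Nd F R Lim leg \<longleftrightarrow> is_cone L Nd F R Lim leg \<and>
     (\<forall>Q c. is_cone L Nd F R Q c \<longrightarrow>
        (\<exists>!u. u \<in> hom L Q Lim \<and> (\<forall>n\<in>Nd. cmp L (leg n) u = c n)))"

end

theory Submission
  imports Defs
begin

text \<open>The v-component of the clearing operator \<Phi> = A \<circ> D factors through the payments
  on the edges into v: \<pi>_v \<circ> \<Phi> = \<alpha>_v \<circ> \<langle>\<delta>_e \<circ> \<pi>_(s e)\<rangle>_(t e = v), so \<pi>_v (\<Phi> x) only depends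
  on the components of x at the sources of those edges. Hence, by induction on k, the
  v-component of \<Phi>^(k+1) x does not depend on x once every directed path ending at v has at
  most k edges. In an acyclic graph directed paths do not repeat edges, so r is finite,
  \<Phi>^(r+1) is constant, and its value is the unique fixed point of \<Phi>.

  A global element of the limit of the liability sheaf is the same as a cone from 1. Such a
  cone is determined by its legs at the vertices, and these legs form a fixed point of \<Phi>;
  conversely every fixed point spreads to a cone.\<close>

section \<open>Categorical preliminaries\<close>

lemma cmp_hom:
  "is_category L \<Longrightarrow> f \<in> hom L a b \<Longrightarrow> g \<in> hom L b c \<Longrightarrow> cmp L g f \<in> hom L a c"
  unfolding is_category_def hom_def by auto

lemma cmp_assoc:
  "is_category L \<Longrightarrow> f \<in> hom L a b \<Longrightarrow> g \<in> hom L b c \<Longrightarrow> h \<in> hom L c d \<Longrightarrow>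
    cmp L h (cmp L g f) = cmp L (cmp L h g) f"
  unfolding is_category_def hom_def by auto

lemma idt_hom: "is_category L \<Longrightarrow> a \<in> ob L \<Longrightarrow> idt L a \<in> hom L a a"
  unfolding is_category_def by auto

lemma cmp_idt_left: "is_category L \<Longrightarrow> f \<in> hom L a b \<Longrightarrow> cmp L (idt L b) f = f"
  unfolding is_category_def hom_def by auto

lemma hom_dom_ob: "is_category L \<Longrightarrow> f \<in> hom L a b \<Longrightarrow> a \<in> ob L"
  unfolding is_category_def hom_def by auto

lemma bang_hom:
  assumes "is_terminal L (trm L)" "Q \<in> ob L"
  shows "bang L Q \<in> hom L Q (trm L)"
proof -
  have "\<exists>!k. k \<in> hom L Q (trm L)" using assms unfolding is_terminal_def by blast
  from theI'[OF this] show ?thesis unfolding bang_def .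
qed

lemma pairing_hom:
  assumes "is_binprod L A B Pr p1 p2" "Q \<in> ob L" "f \<in> hom L Q A" "g \<in> hom L Q B"
  shows "pairing L Q Pr p1 p2 f g \<in> hom L Q Pr"
proof -
  have "\<exists>!u. u \<in> hom L Q Pr \<and> cmp L p1 u = f \<and> cmp L p2 u = g"
    using assms unfolding is_binprod_def by blast
  from theI'[OF this] show ?thesis unfolding pairing_def by blast
qed

lemma product_ob: "is_product L I X Pr pr \<Longrightarrow> Pr \<in> ob L"
  by (simp add: is_product_def)

lemma product_proj_hom: "is_product L I X Pr pr \<Longrightarrow> i \<in> I \<Longrightarrow> pr i \<in> hom L Pr (X i)"
  by (simp add: is_product_def)

lemma tuple_universal:
  assumes "is_product L I X Pr pr" "Q \<in> ob L" "\<And>i. i \<in> I \<Longrightarrow> f i \<in> hom L Q (X i)"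
  shows "\<exists>!u. u \<in> hom L Q Pr \<and> (\<forall>i\<in>I. cmp L (pr i) u = f i)"
  using assms unfolding is_product_def by blast

lemma tuple_hom_proj:
  assumes "is_product L I X Pr pr" "Q \<in> ob L" "\<And>i. i \<in> I \<Longrightarrow> f i \<in> hom L Q (X i)"
  shows tuple_hom: "tuple L Q Pr I pr f \<in> hom L Q Pr"
    and tuple_proj: "i \<in> I \<Longrightarrow> cmp L (pr i) (tuple L Q Pr I pr f) = f i"
  using theI'[OF tuple_universal[OF assms]] unfolding tuple_def by blast+

lemma tuple_unique:
  assumes cat: "is_category L" and prod: "is_product L I X Pr pr" and u: "u \<in> hom L Q Pr"
    and proj: "\<And>i. i \<in> I \<Longrightarrow> cmp L (pr i) u = f i"
  shows "tuple L Q Pr I pr f = u"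
proof -
  have "f i \<in> hom L Q (X i)" if "i \<in> I" for i
    using proj[OF that] cmp_hom[OF cat u product_proj_hom[OF prod that]] by simp
  from tuple_universal[OF prod hom_dom_ob[OF cat u] this]
  show ?thesis unfolding tuple_def using u proj by (blast intro: the1_equality)
qed

lemma product_hom_ext:
  assumes cat: "is_category L" and prod: "is_product L I X Pr pr"
    and u: "u \<in> hom L Q Pr" and u': "u' \<in> hom L Q Pr"
    and proj: "\<And>i. i \<in> I \<Longrightarrow> cmp L (pr i) u = cmp L (pr i) u'"
  shows "u = u'"
proof -
  have "tuple L Q Pr I pr (\<lambda>i. cmp L (pr i) u') = u"
    by (rule tuple_unique[OF cat prod u proj])
  moreover have "tuple L Q Pr I pr (\<lambda>i. cmp L (pr i) u') = u'"
    by (rule tuple_unique[OF cat prod u'], rule refl)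
  ultimately show ?thesis by simp
qed

lemma tuple_cong:
  "(\<And>i. i \<in> I \<Longrightarrow> f i = g i) \<Longrightarrow> tuple L Q Pr I pr f = tuple L Q Pr I pr g"
  unfolding tuple_def by (simp cong: ball_cong)

lemma cone_leg_hom: "is_cone L Nd F R Q c \<Longrightarrow> n \<in> Nd \<Longrightarrow> c n \<in> hom L Q (F n)"
  unfolding is_cone_def by blast

lemma cone_commutes: "is_cone L Nd F R Q c \<Longrightarrow> (h, w, f) \<in> R \<Longrightarrow> cmp L f (c h) = c w"
  unfolding is_cone_def by fast

lemma cone_precomp:
  assumes cat: "is_category L" and cone: "is_cone L Nd F R Q c" and u: "u \<in> hom L Q' Q"
    and arrows: "\<And>h w f. (h, w, f) \<in> R \<Longrightarrow> h \<in> Nd \<and> f \<in> hom L (F h) (F w)"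
  shows "is_cone L Nd F R Q' (\<lambda>n. cmp L (c n) u)"
  unfolding is_cone_def
proof (intro conjI ballI)
  show "Q' \<in> ob L" by (rule hom_dom_ob[OF cat u])
  show "cmp L (c n) u \<in> hom L Q' (F n)" if "n \<in> Nd" for n
    by (rule cmp_hom[OF cat u cone_leg_hom[OF cone that]])
  fix r assume r: "r \<in> R"
  obtain h w f where [simp]: "r = (h, w, f)" by (cases r)
  have "h \<in> Nd" "f \<in> hom L (F h) (F w)" using arrows r by auto
  then have "cmp L f (cmp L (c h) u) = cmp L (cmp L f (c h)) u"
    using cmp_assoc[OF cat u cone_leg_hom[OF cone]] by blast
  then show "case r of (h, w, f) \<Rightarrow> cmp L f (cmp L (c h) u) = cmp L (c w) u"
    using cone_commutes[OF cone] r by simp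
qed

lemma limit_ex1_hom:
  assumes cat: "is_category L" and lim: "is_limit L Nd F R Lim leg"
    and arrows: "\<And>h w f. (h, w, f) \<in> R \<Longrightarrow> h \<in> Nd \<and> f \<in> hom L (F h) (F w)"
    and cone: "is_cone L Nd F R Q c"
    and cone_unique: "\<And>c' n. is_cone L Nd F R Q c' \<Longrightarrow> n \<in> Nd \<Longrightarrow> c' n = c n"
  shows "\<exists>!\<sigma>. \<sigma> \<in> hom L Q Lim"
proof -
  obtain u where u: "u \<in> hom L Q Lim"
    and factor_unique: "\<And>u'. u' \<in> hom L Q Lim \<Longrightarrow> \<forall>n\<in>Nd. cmp L (leg n) u' = c n \<Longrightarrow> u' = u"
    using lim cone unfolding is_limit_def by metis
  have "\<sigma> = u" if \<sigma>: "\<sigma> \<in> hom L Q Lim" for \<sigma>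
  proof (rule factor_unique[OF \<sigma>], intro ballI)
    have "is_cone L Nd F R Lim leg" using lim unfolding is_limit_def by blast
    from cone_precomp[OF cat this \<sigma> arrows]
    show "cmp L (leg n) \<sigma> = c n" if "n \<in> Nd" for n
      using cone_unique that by blast
  qed
  with u show ?thesis by blast
qed

lemma funpow_fixpoint: "f x = x \<Longrightarrow> (f ^^ n) x = x"
  by (induction n) auto

lemma funpow_constant_fixpoint:
  assumes "a \<in> S" "f a \<in> S" and "\<And>x y. x \<in> S \<Longrightarrow> y \<in> S \<Longrightarrow> (f ^^ n) x = (f ^^ n) y"
  shows "f ((f ^^ n) a) = (f ^^ n) a"
proof -
  have "f ((f ^^ n) a) = (f ^^ n) (f a)" by (simp add: funpow_swap1)
  also have "\<dots> = (f ^^ n) a" using assms by blast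
  finally show ?thesis .
qed

section \<open>Directed paths\<close>

lemma dpath_snoc:
  assumes "is_dpath N es" "e \<in> Es N" "es \<noteq> []" "tgt N (last es) = src N e"
  shows "is_dpath N (es @ [e])"
  unfolding is_dpath_def
proof (intro conjI allI impI)
  show "set (es @ [e]) \<subseteq> Es N" using assms unfolding is_dpath_def by auto
  fix i assume i: "Suc i < length (es @ [e])"
  show "tgt N ((es @ [e]) ! i) = src N ((es @ [e]) ! Suc i)"
  proof (cases "Suc i < length es")
    case True
    then show ?thesis using assms(1) unfolding is_dpath_def by (simp add: nth_append)
  next
    case False
    then have "i = length es - 1" "Suc i = length es" using i by auto
    then show ?thesis using assms(3,4) by (simp add: nth_append last_conv_nth)
  qed
qed

lemma dpath_src_trancl:
  assumes path: "is_dpath N es" and "i < j" "j < length es"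
  shows "(src N (es ! i), src N (es ! j)) \<in> (edge_rel N)\<^sup>+"
  using assms(2,3)
proof (induction j)
  case 0
  then show ?case by simp
next
  case (Suc j)
  have "es ! j \<in> Es N" "tgt N (es ! j) = src N (es ! Suc j)"
    using path Suc.prems unfolding is_dpath_def by auto
  then have edge: "(src N (es ! j), src N (es ! Suc j)) \<in> edge_rel N"
    unfolding edge_rel_def by force
  show ?case
  proof (cases "i = j")
    case True
    then show ?thesis using edge by blast
  next
    case False
    then have "(src N (es ! i), src N (es ! j)) \<in> (edge_rel N)\<^sup>+" using Suc by simp
    then show ?thesis using edge by (rule trancl_into_trancl)
  qed
qed

lemma dpath_distinct:
  assumes acyclic: "acyclic (edge_rel N)" and path: "is_dpath N es"
  shows "distinct es"
proof -
  have "es ! i \<noteq> es ! j" if "i < j" "j < length es" for i j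
    using dpath_src_trancl[OF path that] acyclic unfolding acyclic_def by auto
  then show ?thesis unfolding distinct_conv_nth by (metis linorder_neqE_nat)
qed

lemma finite_dpaths:
  assumes "finite (Es N)" "acyclic (edge_rel N)"
  shows "finite {es. is_dpath N es}"
proof (rule finite_subset)
  show "finite {es. set es \<subseteq> Es N \<and> length es \<le> card (Es N)}"
    by (rule finite_lists_length_le[OF assms(1)])
  show "{es. is_dpath N es} \<subseteq> {es. set es \<subseteq> Es N \<and> length es \<le> card (Es N)}"
  proof
    fix es assume "es \<in> {es. is_dpath N es}"
    then have path: "is_dpath N es" by simp
    then have edges: "set es \<subseteq> Es N" unfolding is_dpath_def by simp
    have "length es = card (set es)" using distinct_card[OF dpath_distinct[OF assms(2) path]] by simp
    also have "\<dots> \<le> card (Es N)" by (rule card_mono[OF assms(1) edges])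
    finally show "es \<in> {es. set es \<subseteq> Es N \<and> length es \<le> card (Es N)}" using edges by simp
  qed
qed

lemma dpath_length_le_max_path_len:
  assumes "finite (Es N)" "acyclic (edge_rel N)" "is_dpath N es"
  shows "length es \<le> max_path_len N"
  unfolding max_path_len_def
  by (rule Max_ge) (use finite_dpaths[OF assms(1,2)] assms(3) in auto)

section \<open>The liability hypergraph\<close>

lemma hyp_nodes_cases:
  assumes "n \<in> hyp_nodes N"
  obtains (vertex) v where "v \<in> Vs N" "n = VN v"
    | (edge) e where "e \<in> Es N" "n = EN e"
    | (distributor) v where "v \<in> Vs N" "n = HD v"
    | (aggregator) v where "v \<in> Vs N" "n = HA v"
  using assms unfolding hyp_nodes_def by blast

lemma sheaf_res_cases:
  assumes "(h, w, f) \<in> sheaf_res L N K"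
  obtains (identity) v where "v \<in> Vs N" "h = HD v" "w = VN v" "f = idt L (Xo N v)"
    | (distributor) e where "e \<in> Es N" "h = HD (src N e)" "w = EN e" "f = delta N e"
    | (projection) e where "e \<in> Es N" "h = HA (tgt N e)" "w = EN e" "f = piIn K (tgt N e) e"
    | (aggregator) v where "v \<in> Vs N" "h = HA v" "w = VN v" "f = partial_agg L N K v"
  using assms unfolding sheaf_res_def by blast

lemma sheaf_res_memI:
  shows sheaf_res_identity: "v \<in> Vs N \<Longrightarrow> (HD v, VN v, idt L (Xo N v)) \<in> sheaf_res L N K"
    and sheaf_res_distributor: "e \<in> Es N \<Longrightarrow> (HD (src N e), EN e, delta N e) \<in> sheaf_res L N K"
    and sheaf_res_projection:
      "e \<in> Es N \<Longrightarrow> (HA (tgt N e), EN e, piIn K (tgt N e) e) \<in> sheaf_res L N K"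
    and sheaf_res_aggregator: "v \<in> Vs N \<Longrightarrow> (HA v, VN v, partial_agg L N K v) \<in> sheaf_res L N K"
  unfolding sheaf_res_def by blast+

section \<open>The clearing operator\<close>

locale clearing_system =
  fixes L :: "('o,'m,'z) lcat_scheme"
    and N :: "('v,'e,'o,'m,'y) lnet_scheme"
    and K :: "('v,'e,'o,'m,'x) pchoice_scheme"
  assumes category: "is_category L"
    and terminal: "is_terminal L (trm L)"
    and network: "liability_network L N K"
begin

abbreviation \<Phi> :: "'m \<Rightarrow> 'm" where "\<Phi> \<equiv> clearing_push L N K"

lemma network_facts:
  shows finite_Es: "finite (Es N)"
    and src_in_Vs: "e \<in> Es N \<Longrightarrow> src N e \<in> Vs N"
    and tgt_in_Vs: "e \<in> Es N \<Longrightarrow> tgt N e \<in> Vs N"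
    and Xo_ob: "v \<in> Vs N \<Longrightarrow> Xo N v \<in> ob L"
    and iota_hom: "v \<in> Vs N \<Longrightarrow> iota N v \<in> hom L (trm L) (Xo N v)"
    and delta_hom: "e \<in> Es N \<Longrightarrow> delta N e \<in> hom L (Xo N (src N e)) (bobj L N e)"
    and product_P: "is_product L (Vs N) (Xo N) (Pobj K) (piP K)"
    and product_B: "is_product L (Es N) (bobj L N) (Bobj K) (piB K)"
    and product_In: "v \<in> Vs N \<Longrightarrow> is_product L (in_edges N v) (bobj L N) (Inobj K v) (piIn K v)"
    and binprod_XI:
      "v \<in> Vs N \<Longrightarrow> is_binprod L (Xo N v) (Inobj K v) (XIobj K v) (pr1 K v) (pr2 K v)"
    and ahat_hom: "v \<in> Vs N \<Longrightarrow> ahat N v \<in> hom L (XIobj K v) (Xo N v)"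
  using network unfolding liability_network_def by simp_all

lemma trm_ob: "trm L \<in> ob L"
  using terminal unfolding is_terminal_def by blast

lemma piP_hom: "v \<in> Vs N \<Longrightarrow> piP K v \<in> hom L (Pobj K) (Xo N v)"
  by (rule product_proj_hom[OF product_P])

lemma piIn_hom: "e \<in> Es N \<Longrightarrow> piIn K (tgt N e) e \<in> hom L (Inobj K (tgt N e)) (bobj L N e)"
  by (rule product_proj_hom[OF product_In[OF tgt_in_Vs]]) (simp_all add: in_edges_def)

lemma partial_agg_hom:
  assumes v: "v \<in> Vs N"
  shows "partial_agg L N K v \<in> hom L (Inobj K v) (Xo N v)"
proof -
  have In: "Inobj K v \<in> ob L" by (rule product_ob[OF product_In[OF v]])
  have "cmp L (iota N v) (bang L (Inobj K v)) \<in> hom L (Inobj K v) (Xo N v)"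
    by (rule cmp_hom[OF category bang_hom[OF terminal In] iota_hom[OF v]])
  from pairing_hom[OF binprod_XI[OF v] In this idt_hom[OF category In]]
  show ?thesis unfolding partial_agg_def by (rule cmp_hom[OF category _ ahat_hom[OF v]])
qed

lemma Dmap_hom_proj:
  shows Dmap_hom: "Dmap L N K \<in> hom L (Pobj K) (Bobj K)"
    and Dmap_proj: "e \<in> Es N \<Longrightarrow> cmp L (piB K e) (Dmap L N K) = cmp L (delta N e) (piP K (src N e))"
proof -
  have "cmp L (delta N e) (piP K (src N e)) \<in> hom L (Pobj K) (bobj L N e)" if "e \<in> Es N" for e
    by (rule cmp_hom[OF category piP_hom[OF src_in_Vs[OF that]] delta_hom[OF that]])
  from tuple_hom_proj[OF product_B product_ob[OF product_P] this]
  show "Dmap L N K \<in> hom L (Pobj K) (Bobj K)"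
    and "e \<in> Es N \<Longrightarrow> cmp L (piB K e) (Dmap L N K) = cmp L (delta N e) (piP K (src N e))"
    unfolding Dmap_def by blast+
qed

definition in_restriction :: "'v \<Rightarrow> 'm" where
  "in_restriction v = tuple L (Bobj K) (Inobj K v) (in_edges N v) (piIn K v) (piB K)"

lemma in_restriction_hom_proj:
  assumes v: "v \<in> Vs N"
  shows in_restriction_hom: "in_restriction v \<in> hom L (Bobj K) (Inobj K v)"
    and in_restriction_proj: "e \<in> in_edges N v \<Longrightarrow> cmp L (piIn K v e) (in_restriction v) = piB K e"
proof -
  have "piB K e \<in> hom L (Bobj K) (bobj L N e)" if "e \<in> in_edges N v" for e
    using product_proj_hom[OF product_B] that by (simp add: in_edges_def)
  from tuple_hom_proj[OF product_In[OF v] product_ob[OF product_B] this]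
  show "in_restriction v \<in> hom L (Bobj K) (Inobj K v)"
    and "e \<in> in_edges N v \<Longrightarrow> cmp L (piIn K v e) (in_restriction v) = piB K e"
    unfolding in_restriction_def by blast+
qed

lemma Amap_hom_proj:
  shows Amap_hom: "Amap L N K \<in> hom L (Bobj K) (Pobj K)"
    and Amap_proj:
      "v \<in> Vs N \<Longrightarrow> cmp L (piP K v) (Amap L N K) = cmp L (partial_agg L N K v) (in_restriction v)"
proof -
  have "cmp L (partial_agg L N K v) (in_restriction v) \<in> hom L (Bobj K) (Xo N v)" if "v \<in> Vs N" for v
    by (rule cmp_hom[OF category in_restriction_hom[OF that] partial_agg_hom[OF that]])
  from tuple_hom_proj[OF product_P product_ob[OF product_B] this]
  show "Amap L N K \<in> hom L (Bobj K) (Pobj K)"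
    and "v \<in> Vs N \<Longrightarrow> cmp L (piP K v) (Amap L N K) = cmp L (partial_agg L N K v) (in_restriction v)"
    unfolding Amap_def in_restriction_def[symmetric] by blast+
qed

lemma clearing_push_hom: "x \<in> hom L (trm L) (Pobj K) \<Longrightarrow> \<Phi> x \<in> hom L (trm L) (Pobj K)"
  unfolding clearing_push_def clearing_op_def
  by (rule cmp_hom[OF category _ cmp_hom[OF category Dmap_hom Amap_hom]])

lemma clearing_iterate_hom:
  "x \<in> hom L (trm L) (Pobj K) \<Longrightarrow> (\<Phi> ^^ n) x \<in> hom L (trm L) (Pobj K)"
  by (induction n) (simp_all add: clearing_push_hom)

lemma global_elem_exists: "\<exists>x. x \<in> hom L (trm L) (Pobj K)"
  using tuple_hom[OF product_P trm_ob iota_hom] by blast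

definition edge_payment :: "'m \<Rightarrow> 'e \<Rightarrow> 'm" where
  "edge_payment x e = cmp L (delta N e) (cmp L (piP K (src N e)) x)"

definition incoming_payments :: "'m \<Rightarrow> 'v \<Rightarrow> 'm" where
  "incoming_payments x v = tuple L (trm L) (Inobj K v) (in_edges N v) (piIn K v) (edge_payment x)"

lemma edge_payment_hom:
  "x \<in> hom L (trm L) (Pobj K) \<Longrightarrow> e \<in> Es N \<Longrightarrow> edge_payment x e \<in> hom L (trm L) (bobj L N e)"
  unfolding edge_payment_def
  by (rule cmp_hom[OF category cmp_hom[OF category _ piP_hom[OF src_in_Vs]] delta_hom])

lemma incoming_payments_hom_proj:
  assumes x: "x \<in> hom L (trm L) (Pobj K)" and v: "v \<in> Vs N"
  shows incoming_payments_hom: "incoming_payments x v \<in> hom L (trm L) (Inobj K v)"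
    and incoming_payments_proj:
      "e \<in> in_edges N v \<Longrightarrow> cmp L (piIn K v e) (incoming_payments x v) = edge_payment x e"
proof -
  have "edge_payment x e \<in> hom L (trm L) (bobj L N e)" if "e \<in> in_edges N v" for e
    using edge_payment_hom[OF x] that by (simp add: in_edges_def)
  from tuple_hom_proj[OF product_In[OF v] trm_ob this]
  show "incoming_payments x v \<in> hom L (trm L) (Inobj K v)"
    and "e \<in> in_edges N v \<Longrightarrow> cmp L (piIn K v e) (incoming_payments x v) = edge_payment x e"
    unfolding incoming_payments_def by blast+
qed

lemma incoming_payments_via_Dmap:
  assumes x: "x \<in> hom L (trm L) (Pobj K)" and v: "v \<in> Vs N"
  shows "cmp L (in_restriction v) (cmp L (Dmap L N K) x) = incoming_payments x v"
  unfolding incoming_payments_def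
proof (rule tuple_unique[OF category product_In[OF v], symmetric])
  have Dx: "cmp L (Dmap L N K) x \<in> hom L (trm L) (Bobj K)" by (rule cmp_hom[OF category x Dmap_hom])
  then show "cmp L (in_restriction v) (cmp L (Dmap L N K) x) \<in> hom L (trm L) (Inobj K v)"
    by (rule cmp_hom[OF category _ in_restriction_hom[OF v]])
  fix e assume e: "e \<in> in_edges N v"
  then have "e \<in> Es N" by (simp add: in_edges_def)
  have "cmp L (piIn K v e) (cmp L (in_restriction v) (cmp L (Dmap L N K) x))
      = cmp L (piB K e) (cmp L (Dmap L N K) x)"
    using cmp_assoc[OF category Dx in_restriction_hom[OF v] product_proj_hom[OF product_In[OF v] e]]
      in_restriction_proj[OF v e] by simp
  also have "\<dots> = cmp L (cmp L (delta N e) (piP K (src N e))) x"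
    using cmp_assoc[OF category x Dmap_hom product_proj_hom[OF product_B \<open>e \<in> Es N\<close>]]
      Dmap_proj[OF \<open>e \<in> Es N\<close>] by simp
  also have "\<dots> = edge_payment x e"
    unfolding edge_payment_def
    by (rule cmp_assoc[OF category x piP_hom[OF src_in_Vs] delta_hom, symmetric]) fact+
  finally show "cmp L (piIn K v e) (cmp L (in_restriction v) (cmp L (Dmap L N K) x)) = edge_payment x e" .
qed

lemma clearing_push_proj:
  assumes x: "x \<in> hom L (trm L) (Pobj K)" and v: "v \<in> Vs N"
  shows "cmp L (piP K v) (\<Phi> x) = cmp L (partial_agg L N K v) (incoming_payments x v)"
proof -
  have Dx: "cmp L (Dmap L N K) x \<in> hom L (trm L) (Bobj K)" by (rule cmp_hom[OF category x Dmap_hom])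
  have "cmp L (piP K v) (\<Phi> x) = cmp L (piP K v) (cmp L (Amap L N K) (cmp L (Dmap L N K) x))"
    unfolding clearing_push_def clearing_op_def using cmp_assoc[OF category x Dmap_hom Amap_hom] by simp
  also have "\<dots> = cmp L (cmp L (partial_agg L N K v) (in_restriction v)) (cmp L (Dmap L N K) x)"
    using cmp_assoc[OF category Dx Amap_hom piP_hom[OF v]] Amap_proj[OF v] by simp
  also have "\<dots> = cmp L (partial_agg L N K v) (incoming_payments x v)"
    using cmp_assoc[OF category Dx in_restriction_hom[OF v] partial_agg_hom[OF v]]
      incoming_payments_via_Dmap[OF x v] by simp
  finally show ?thesis .
qed

lemma clearing_push_local:
  assumes v: "v \<in> Vs N" and x: "x \<in> hom L (trm L) (Pobj K)" and y: "y \<in> hom L (trm L) (Pobj K)"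
    and agree: "\<And>e. e \<in> in_edges N v \<Longrightarrow> cmp L (piP K (src N e)) x = cmp L (piP K (src N e)) y"
  shows "cmp L (piP K v) (\<Phi> x) = cmp L (piP K v) (\<Phi> y)"
proof -
  have "incoming_payments x v = incoming_payments y v"
    unfolding incoming_payments_def edge_payment_def by (rule tuple_cong) (simp add: agree)
  then show ?thesis using clearing_push_proj[OF x v] clearing_push_proj[OF y v] by simp
qed

lemma clearing_iterate_proj_stable:
  assumes "v \<in> Vs N" and x: "x \<in> hom L (trm L) (Pobj K)" and y: "y \<in> hom L (trm L) (Pobj K)"
    and "\<And>es. is_dpath N es \<Longrightarrow> es \<noteq> [] \<Longrightarrow> tgt N (last es) = v \<Longrightarrow> length es \<le> k"
  shows "cmp L (piP K v) ((\<Phi> ^^ Suc k) x) = cmp L (piP K v) ((\<Phi> ^^ Suc k) y)"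
  using assms(1,4)
proof (induction k arbitrary: v)
  case 0
  have "in_edges N v = {}"
  proof (rule ccontr)
    assume "in_edges N v \<noteq> {}"
    then obtain e where "e \<in> Es N" "tgt N e = v" by (auto simp: in_edges_def)
    then have "is_dpath N [e]" "tgt N (last [e]) = v" by (simp_all add: is_dpath_def)
    with "0.prems"(2)[of "[e]"] show False by simp
  qed
  then show ?case using clearing_push_local[OF "0.prems"(1) x y] by simp
next
  case (Suc k)
  have "cmp L (piP K v) (\<Phi> ((\<Phi> ^^ Suc k) x)) = cmp L (piP K v) (\<Phi> ((\<Phi> ^^ Suc k) y))"
  proof (rule clearing_push_local[OF Suc.prems(1) clearing_iterate_hom[OF x] clearing_iterate_hom[OF y]])
    fix e assume "e \<in> in_edges N v"
    then have e: "e \<in> Es N" "tgt N e = v" by (simp_all add: in_edges_def)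
    show "cmp L (piP K (src N e)) ((\<Phi> ^^ Suc k) x) = cmp L (piP K (src N e)) ((\<Phi> ^^ Suc k) y)"
    proof (rule Suc.IH[OF src_in_Vs[OF e(1)]])
      fix es assume path: "is_dpath N es" and "es \<noteq> []" "tgt N (last es) = src N e"
      from dpath_snoc[OF path e(1) this(2,3)]
      show "length es \<le> k" using Suc.prems(2)[of "es @ [e]"] e(2) by simp
    qed
  qed
  then show ?case by simp
qed

section \<open>Clearing sections\<close>

definition clearing_section :: "'m \<Rightarrow> ('v,'e) hnode \<Rightarrow> 'm" where
  "clearing_section x n = (case n of VN v \<Rightarrow> cmp L (piP K v) x | HD v \<Rightarrow> cmp L (piP K v) x
     | EN e \<Rightarrow> edge_payment x e | HA v \<Rightarrow> incoming_payments x v)"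

lemma sheaf_res_hom:
  assumes "(h, w, f) \<in> sheaf_res L N K"
  shows "h \<in> hyp_nodes N \<and> f \<in> hom L (sheaf_stalk L N K h) (sheaf_stalk L N K w)"
  using assms
proof (cases rule: sheaf_res_cases)
  case (identity v)
  then show ?thesis using idt_hom[OF category Xo_ob] by (simp add: hyp_nodes_def sheaf_stalk_def)
next
  case (distributor e)
  then show ?thesis using delta_hom src_in_Vs by (simp add: hyp_nodes_def sheaf_stalk_def)
next
  case (projection e)
  then show ?thesis using piIn_hom tgt_in_Vs by (simp add: hyp_nodes_def sheaf_stalk_def)
next
  case (aggregator v)
  then show ?thesis using partial_agg_hom by (simp add: hyp_nodes_def sheaf_stalk_def)
qed

lemma clearing_section_cone:
  assumes x: "x \<in> hom L (trm L) (Pobj K)" and fixed: "\<Phi> x = x"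
  shows "is_cone L (hyp_nodes N) (sheaf_stalk L N K) (sheaf_res L N K) (trm L) (clearing_section x)"
  unfolding is_cone_def
proof (intro conjI ballI)
  show "trm L \<in> ob L" by (rule trm_ob)
  fix n assume "n \<in> hyp_nodes N"
  then show "clearing_section x n \<in> hom L (trm L) (sheaf_stalk L N K n)"
  proof (cases rule: hyp_nodes_cases)
    case (vertex v)
    then show ?thesis using cmp_hom[OF category x piP_hom] by (simp add: clearing_section_def sheaf_stalk_def)
  next
    case (edge e)
    then show ?thesis using edge_payment_hom[OF x] by (simp add: clearing_section_def sheaf_stalk_def)
  next
    case (distributor v)
    then show ?thesis using cmp_hom[OF category x piP_hom] by (simp add: clearing_section_def sheaf_stalk_def)
  next
    case (aggregator v)
    then show ?thesis using incoming_payments_hom[OF x] by (simp add: clearing_section_def sheaf_stalk_def)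
  qed
next
  fix r assume "r \<in> sheaf_res L N K"
  moreover obtain h w f where r: "r = (h, w, f)" by (cases r)
  ultimately have "(h, w, f) \<in> sheaf_res L N K" by simp
  then have "cmp L f (clearing_section x h) = clearing_section x w"
  proof (cases rule: sheaf_res_cases)
    case (identity v)
    then show ?thesis using cmp_idt_left[OF category cmp_hom[OF category x piP_hom]]
      by (simp add: clearing_section_def)
  next
    case (distributor e)
    then show ?thesis by (simp add: clearing_section_def edge_payment_def)
  next
    case (projection e)
    then show ?thesis using incoming_payments_proj[OF x tgt_in_Vs]
      by (simp add: clearing_section_def in_edges_def)
  next
    case (aggregator v)
    have "cmp L (partial_agg L N K v) (incoming_payments x v) = cmp L (piP K v) x"
      using clearing_push_proj[OF x aggregator(1)] fixed by simp
    then show ?thesis using aggregator by (simp add: clearing_section_def)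
  qed
  then show "case r of (h, w, f) \<Rightarrow> cmp L f (clearing_section x h) = clearing_section x w"
    using r by simp
qed

definition cone_state :: "(('v,'e) hnode \<Rightarrow> 'm) \<Rightarrow> 'm" where
  "cone_state c = tuple L (trm L) (Pobj K) (Vs N) (piP K) (\<lambda>v. c (VN v))"

context
  fixes c
  assumes cone: "is_cone L (hyp_nodes N) (sheaf_stalk L N K) (sheaf_res L N K) (trm L) c"
begin

lemma cone_state_hom_proj:
  shows cone_state_hom: "cone_state c \<in> hom L (trm L) (Pobj K)"
    and cone_state_proj: "v \<in> Vs N \<Longrightarrow> cmp L (piP K v) (cone_state c) = c (VN v)"
proof -
  have "c (VN v) \<in> hom L (trm L) (Xo N v)" if "v \<in> Vs N" for v
    using cone_leg_hom[OF cone, of "VN v"] that by (simp add: hyp_nodes_def sheaf_stalk_def)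
  from tuple_hom_proj[OF product_P trm_ob this]
  show "cone_state c \<in> hom L (trm L) (Pobj K)"
    and "v \<in> Vs N \<Longrightarrow> cmp L (piP K v) (cone_state c) = c (VN v)"
    unfolding cone_state_def by blast+
qed

lemma cone_eq_clearing_section:
  assumes "n \<in> hyp_nodes N"
  shows "c n = clearing_section (cone_state c) n"
proof -
  have distributor: "c (HD v) = cmp L (piP K v) (cone_state c)" if v: "v \<in> Vs N" for v
  proof -
    have "c (HD v) \<in> hom L (trm L) (Xo N v)"
      using cone_leg_hom[OF cone, of "HD v"] v by (simp add: hyp_nodes_def sheaf_stalk_def)
    then have "c (HD v) = cmp L (idt L (Xo N v)) (c (HD v))" by (simp add: cmp_idt_left[OF category])
    also have "\<dots> = c (VN v)" by (rule cone_commutes[OF cone sheaf_res_identity[OF v]])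
    finally show ?thesis using cone_state_proj[OF v] by simp
  qed
  have edge: "c (EN e) = edge_payment (cone_state c) e" if e: "e \<in> Es N" for e
    using cone_commutes[OF cone sheaf_res_distributor[OF e]] distributor[OF src_in_Vs[OF e]]
    by (simp add: edge_payment_def)
  have aggregator: "c (HA v) = incoming_payments (cone_state c) v" if v: "v \<in> Vs N" for v
    unfolding incoming_payments_def
  proof (rule tuple_unique[OF category product_In[OF v], symmetric])
    show "c (HA v) \<in> hom L (trm L) (Inobj K v)"
      using cone_leg_hom[OF cone, of "HA v"] v by (simp add: hyp_nodes_def sheaf_stalk_def)
    fix e assume "e \<in> in_edges N v"
    then have e: "e \<in> Es N" "tgt N e = v" by (simp_all add: in_edges_def)
    show "cmp L (piIn K v e) (c (HA v)) = edge_payment (cone_state c) e"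
      using cone_commutes[OF cone sheaf_res_projection[OF e(1)]] edge[OF e(1)] e(2) by simp
  qed
  from assms show ?thesis
    by (cases rule: hyp_nodes_cases)
      (simp_all add: clearing_section_def cone_state_proj distributor edge aggregator)
qed

lemma cone_state_fixpoint: "\<Phi> (cone_state c) = cone_state c"
proof (rule product_hom_ext[OF category product_P clearing_push_hom[OF cone_state_hom] cone_state_hom])
  fix v assume v: "v \<in> Vs N"
  have "cmp L (piP K v) (\<Phi> (cone_state c))
      = cmp L (partial_agg L N K v) (incoming_payments (cone_state c) v)"
    by (rule clearing_push_proj[OF cone_state_hom v])
  also have "\<dots> = cmp L (partial_agg L N K v) (c (HA v))"
    using cone_eq_clearing_section[of "HA v"] v by (simp add: hyp_nodes_def clearing_section_def)
  also have "\<dots> = c (VN v)" by (rule cone_commutes[OF cone sheaf_res_aggregator[OF v]])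
  finally show "cmp L (piP K v) (\<Phi> (cone_state c)) = cmp L (piP K v) (cone_state c)"
    using cone_state_proj[OF v] by simp
qed

end

end

locale acyclic_clearing_system = clearing_system +
  assumes acyclic: "acyclic (edge_rel N)"
begin

lemma clearing_iterate_constant:
  assumes x: "x \<in> hom L (trm L) (Pobj K)" and y: "y \<in> hom L (trm L) (Pobj K)"
  shows "(\<Phi> ^^ Suc (max_path_len N)) x = (\<Phi> ^^ Suc (max_path_len N)) y"
proof (rule product_hom_ext[OF category product_P clearing_iterate_hom[OF x] clearing_iterate_hom[OF y]])
  fix v assume "v \<in> Vs N"
  then show "cmp L (piP K v) ((\<Phi> ^^ Suc (max_path_len N)) x) = cmp L (piP K v) ((\<Phi> ^^ Suc (max_path_len N)) y)"
    using clearing_iterate_proj_stable[OF _ x y] dpath_length_le_max_path_len[OF finite_Es acyclic]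
    by blast
qed

lemma clearing_fixpoint_unique:
  assumes "x \<in> hom L (trm L) (Pobj K)" "\<Phi> x = x" "y \<in> hom L (trm L) (Pobj K)" "\<Phi> y = y"
  shows "x = y"
  using clearing_iterate_constant[OF assms(1,3)] funpow_fixpoint[of \<Phi>] assms(2,4) by metis

lemma clearing_iterate_reaches_fixpoint:
  "\<exists>xs. xs \<in> hom L (trm L) (Pobj K) \<and> \<Phi> xs = xs \<and>
     (\<forall>x\<in>hom L (trm L) (Pobj K). (\<Phi> ^^ Suc (max_path_len N)) x = xs)"
proof -
  obtain a where a: "a \<in> hom L (trm L) (Pobj K)" using global_elem_exists by blast
  define xs where "xs = (\<Phi> ^^ Suc (max_path_len N)) a"
  have "\<Phi> xs = xs"
    unfolding xs_def
    by (rule funpow_constant_fixpoint[OF a clearing_push_hom[OF a] clearing_iterate_constant])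
  moreover have "xs \<in> hom L (trm L) (Pobj K)" unfolding xs_def by (rule clearing_iterate_hom[OF a])
  ultimately show ?thesis using clearing_iterate_constant[OF _ a] unfolding xs_def by blast
qed

lemma unique_clearing_section:
  assumes lim: "is_limit L (hyp_nodes N) (sheaf_stalk L N K) (sheaf_res L N K) Lim leg"
  shows "\<exists>!\<sigma>. \<sigma> \<in> hom L (trm L) Lim"
proof -
  obtain xs where xs: "xs \<in> hom L (trm L) (Pobj K)" "\<Phi> xs = xs"
    using clearing_iterate_reaches_fixpoint by blast
  show ?thesis
  proof (rule limit_ex1_hom[OF category lim sheaf_res_hom clearing_section_cone[OF xs]])
    fix c n
    assume cone: "is_cone L (hyp_nodes N) (sheaf_stalk L N K) (sheaf_res L N K) (trm L) c"
      and "n \<in> hyp_nodes N"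
    have "cone_state c = xs"
      using clearing_fixpoint_unique[OF cone_state_hom[OF cone] cone_state_fixpoint[OF cone] xs] .
    then show "c n = clearing_section xs n" using cone_eq_clearing_section[OF cone \<open>n \<in> hyp_nodes N\<close>] by simp
  qed
qed

end

theorem mainTheorem8:
  fixes L :: "('o,'m) lcat"
    and N :: "('v,'e,'o,'m) lnet"
    and K :: "('v,'e,'o,'m) pchoice"
  assumes "liability_category L"
    and "liability_network L N K"
    and "acyclic (edge_rel N)"
  shows "(\<exists>xs. xs \<in> hom L (trm L) (Pobj K) \<and> clearing_push L N K xs = xs \<and>
            (\<forall>x\<in>hom L (trm L) (Pobj K).
               (clearing_push L N K ^^ Suc (max_path_len N)) x = xs))
         \<and> (\<forall>Lim leg. is_limit L (hyp_nodes N) (sheaf_stalk L N K) (sheaf_res L N K) Lim leg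
              \<longrightarrow> (\<exists>!\<sigma>. \<sigma> \<in> hom L (trm L) Lim))"
proof -
  interpret acyclic_clearing_system L N K
    using assms by unfold_locales (simp_all add: liability_category_def)
  show ?thesis using clearing_iterate_reaches_fixpoint unique_clearing_section by blast
qed

end
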